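(* For every $n\ge 0$, let $K_n$ be any virtual knot diagram whose arrow diagram is ${\mathcal A}_n$. Then in the quandle of $K_n$ all generators are equal, so the quandle is generated by a single element, and the fundamental group of $K_n$ (defined via the Wirtinger-type presentation) is infinite cyclic, i.e. isomorphic to that of the unknot.
   Context: A virtual knot diagram is a generic immersion of an oriented circle in the plane in which each double point is a real crossing (with over/under information) or a virtual crossing. Its arrow diagram is the counterclockwise-oriented parametrizing circle with one arrow per real crossing joining its two preimages, pointing from the overcrossing preimage to the undercrossing preimage; an endpoint has sign $+$ if, viewing its strand in the direction of orientation, the other strand passes from right to left, and $-$ otherwise. The arrow diagram ${\mathcal A}_n$ ($n\ge0$) has arrows $x,y_1,\dots,y_n$ with endpoints in counterclockwise order $X^+,Y_1^+,\dots,Y_n^+,X^-,Y_n^-,\dots,Y_1^-$; $x$ points from $X^+$ to $X^-$; $y_j$ points from $Y_j^-$ to $Y_j^+$ if $n-j$ is even and from $Y_j^+$ to $Y_j^-$ if $n-j$ is odd. Quandle of a diagram: one generator per bridge arc (arc running between undercrossings at real crossings; labels pass unchanged through virtual crossings), and at each real crossing with overcrossing label $a$, incoming undercrossing label $b$, the outgoing undercrossing label is $c=b\triangleright a$ or $c=b\triangleleft a$ depending on the crossing sign, in the free quandle (a quandle satisfies $a\triangleright a=a\triangleleft a=a$, $(a\triangleleft b)\triangleright b=a=(a\triangleright b)\triangleleft b$, unique solvability, and self-distributivity). The fundamental group is the group with one generator per bridge arc and, at each real crossing, the relation $c=a^{\epsilon}ba^{-\epsilon}$ with $\epsilon=\pm1$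 the crossing sign. *)

theory Defs
  imports "HOL-Algebra.Elementary_Groups"
begin

text \<open>An arrow diagram on the counterclockwise-oriented circle is given by a number N of
  endpoint positions 0,...,N-1 (in counterclockwise order, which is the orientation of the knot)
  and a list of arrows (t, h, s): the arrow points from position t (overcrossing preimage) to
  position h (undercrossing preimage), and s is True iff the crossing is positive.\<close>

type_synonym arrow = "nat \<times> nat \<times> bool"

definition heads :: "arrow list \<Rightarrow> nat set" where
  "heads A = (\<lambda>(t, h, s). h) ` set A"

text \<open>Cyclic distance from position q forward to position p, in {1..N} (equal to N iff p = q).\<close>
definition cdist :: "nat \<Rightarrow> nat \<Rightarrow> nat \<Rightarrow> nat" where
  "cdist N q p = (p + N - q - 1) mod N + 1"

text \<open>Bridge arcs run from one undercrossing (head) to the next; an arc is identified by the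
  head at which it starts. The arc through position p (for p not a head), resp. the arc
  coming into the head p, is the one starting at the last head strictly before p.\<close>
definition arc_before :: "nat \<Rightarrow> arrow list \<Rightarrow> nat \<Rightarrow> nat" where
  "arc_before N A p = (ARG_MIN (\<lambda>h. cdist N h p) h. h \<in> heads A)"

datatype qterm = QGen nat | QRt qterm qterm | QLt qterm qterm
  \<comment> \<open>QRt a b = a \<triangleright> b,  QLt a b = a \<triangleleft> b\<close>

inductive qeq :: "(qterm \<times> qterm) set \<Rightarrow> qterm \<Rightarrow> qterm \<Rightarrow> bool" for R where
  qrel: "(a, b) \<in> R \<Longrightarrow> qeq R a b"
| qrefl: "qeq R a a"
| qsym: "qeq R a b \<Longrightarrow> qeq R b a"
| qtrans: "qeq R a b \<Longrightarrow> qeq R b c \<Longrightarrow> qeq R a c"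
| qcongRt: "qeq R a a' \<Longrightarrow> qeq R b b' \<Longrightarrow> qeq R (QRt a b) (QRt a' b')"
| qcongLt: "qeq R a a' \<Longrightarrow> qeq R b b' \<Longrightarrow> qeq R (QLt a b) (QLt a' b')"
| qidemRt: "qeq R (QRt a a) a"
| qidemLt: "qeq R (QLt a a) a"
| qcancel1: "qeq R (QRt (QLt a b) b) a"
| qcancel2: "qeq R (QLt (QRt a b) b) a"
| qdistr: "qeq R (QRt (QRt a b) c) (QRt (QRt a c) (QRt b c))"

text \<open>Quandle relations of an arrow diagram: at arrow (t,h,s) the overcrossing label is the arc
  through t, the incoming undercrossing label is the arc coming into h, and the outgoing one is
  the arc starting at h; positive crossings use \<triangleright>, negative ones \<triangleleft>.\<close>
definition quandle_rels :: "nat \<Rightarrow> arrow list \<Rightarrow> (qterm \<times> qterm) set" where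
  "quandle_rels N A = (\<lambda>(t, h, s).
      (QGen h, (if s then QRt else QLt) (QGen (arc_before N A h)) (QGen (arc_before N A t))))
      ` set A"

datatype gterm = GGen nat | GOne | GMul gterm gterm | GInv gterm

inductive geq :: "(gterm \<times> gterm) set \<Rightarrow> gterm \<Rightarrow> gterm \<Rightarrow> bool" for R where
  grel: "(a, b) \<in> R \<Longrightarrow> geq R a b"
| grefl: "geq R a a"
| gsym: "geq R a b \<Longrightarrow> geq R b a"
| gtrans: "geq R a b \<Longrightarrow> geq R b c \<Longrightarrow> geq R a c"
| gcongMul: "geq R a a' \<Longrightarrow> geq R b b' \<Longrightarrow> geq R (GMul a b) (GMul a' b')"
| gcongInv: "geq R a a' \<Longrightarrow> geq R (GInv a) (GInv a')"
| gassoc: "geq R (GMul (GMul a b) c) (GMul a (GMul b c))"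
| glunit: "geq R (GMul GOne a) a"
| glinv: "geq R (GMul (GInv a) a) GOne"

fun ggens :: "gterm \<Rightarrow> nat set" where
  "ggens (GGen i) = {i}"
| "ggens GOne = {}"
| "ggens (GMul a b) = ggens a \<union> ggens b"
| "ggens (GInv a) = ggens a"

definition pres_group :: "nat set \<Rightarrow> (gterm \<times> gterm) set \<Rightarrow> gterm set monoid" where
  "pres_group S R = \<lparr>carrier = {{t. geq R s t} | s. ggens s \<subseteq> S},
      monoid.mult = (\<lambda>X Y. {t. \<exists>a\<in>X. \<exists>b\<in>Y. geq R (GMul a b) t}),
      one = {t. geq R GOne t}\<rparr>"

definition group_rels :: "nat \<Rightarrow> arrow list \<Rightarrow> (gterm \<times> gterm) set" where
  "group_rels N A = (\<lambda>(t, h, s).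
      let a = GGen (arc_before N A t); b = GGen (arc_before N A h) in
      (GGen h, if s then GMul (GMul a b) (GInv a) else GMul (GMul (GInv a) b) a)) ` set A"

definition fund_group :: "nat \<Rightarrow> arrow list \<Rightarrow> gterm set monoid" where
  "fund_group N A = pres_group (heads A) (group_rels N A)"

text \<open>Positions (counterclockwise): X+ = 0, Y_j+ = j (1 \<le> j \<le> n), X- = n+1,
  Y_j- = 2n+2-j. An arrow's crossing sign is the sign of its tail (overcrossing) endpoint.\<close>

definition A_N :: "nat \<Rightarrow> nat" where "A_N n = 2 * n + 2"

definition A_arrows :: "nat \<Rightarrow> arrow list" where
  "A_arrows n = (0, n + 1, True) #
     map (\<lambda>j. if even (n - j) then (2 * n + 2 - j, j, False) else (j, 2 * n + 2 - j, True))
       [1..<n + 1]"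

end

theory Submission
  imports Defs
begin

text \<open>Name each bridge arc of \<open>\<A>\<^sub>n\<close> by the head at which it starts and list the arcs in
  the zigzag order \<open>z\<^sub>0, z\<^sub>1, \<dots> = n, n+1, n-2, n+3, n-4, \<dots>\<close>, ending with the last
  head (and \<open>z\<^sub>k\<close> = last head for all larger \<open>k\<close>). The arrow \<open>y\<^bsub>n-k\<^esub>\<close> joins positions
  \<open>n-k\<close> and \<open>n+k+2\<close>; its crossing has under-arcs \<open>z\<^sub>k\<close>, \<open>z\<^bsub>k+2\<^esub>\<close> and over-arc
  \<open>z\<^bsub>k+1\<^esub>\<close>. Both in a quandle and in a group, the relation of a crossing with over-arc
  \<open>a\<close> and under-arcs \<open>b\<close>, \<open>c\<close> gives \<open>c = a \<longleftrightarrow> b = a\<close>. At \<open>y\<^sub>1\<close> the over-arc and one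
  under-arc are both the last arc, so the equalities start there and propagate down the list,
  identifying all arcs. The fundamental group is then cyclic, and the exponent sum, which the
  Wirtinger relations preserve, maps it isomorphically onto \<open>\<int>\<close>.\<close>

section \<open>Presented groups\<close>

definition geq_class :: "(gterm \<times> gterm) set \<Rightarrow> gterm \<Rightarrow> gterm set" where
  "geq_class R s = {t. geq R s t}"

lemma equivp_geq: "equivp (geq R)"
  by (intro equivpI reflpI sympI transpI) (auto intro: geq.grefl geq.gsym geq.gtrans)

lemma geq_class_eq_iff: "geq_class R a = geq_class R b \<longleftrightarrow> geq R a b"
proof
  assume "geq_class R a = geq_class R b"
  then show "geq R a b"
    by (simp add: geq_class_def set_eq_iff) (metis geq.grefl)
qed (auto simp: geq_class_def intro: geq.gtrans geq.gsym)

lemma carrier_pres_group: "carrier (pres_group S R) = geq_class R ` {s. ggens s \<subseteq> S}"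
  by (auto simp: pres_group_def geq_class_def)

lemma one_pres_group: "\<one>\<^bsub>pres_group S R\<^esub> = geq_class R GOne"
  by (simp add: pres_group_def geq_class_def)

lemma mult_pres_group:
  "geq_class R a \<otimes>\<^bsub>pres_group S R\<^esub> geq_class R b = geq_class R (GMul a b)"
  unfolding pres_group_def geq_class_def
  by (auto intro: geq.gtrans geq.gcongMul geq.grefl)

lemma geq_class_in_carrier: "ggens s \<subseteq> S \<Longrightarrow> geq_class R s \<in> carrier (pres_group S R)"
  by (auto simp: carrier_pres_group)

lemma group_pres_group: "group (pres_group S R)"
proof (rule groupI)
  show "x \<otimes>\<^bsub>pres_group S R\<^esub> y \<in> carrier (pres_group S R)"
    if "x \<in> carrier (pres_group S R)" "y \<in> carrier (pres_group S R)" for x y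
    using that by (auto simp: carrier_pres_group mult_pres_group)
  show "\<one>\<^bsub>pres_group S R\<^esub> \<in> carrier (pres_group S R)"
    by (simp add: one_pres_group geq_class_in_carrier)
  show "x \<otimes>\<^bsub>pres_group S R\<^esub> y \<otimes>\<^bsub>pres_group S R\<^esub> z =
      x \<otimes>\<^bsub>pres_group S R\<^esub> (y \<otimes>\<^bsub>pres_group S R\<^esub> z)"
    if "x \<in> carrier (pres_group S R)" "y \<in> carrier (pres_group S R)"
      "z \<in> carrier (pres_group S R)" for x y z
    using that by (clarsimp simp: carrier_pres_group mult_pres_group)
      (simp add: geq_class_eq_iff geq.gassoc)
  show "\<one>\<^bsub>pres_group S R\<^esub> \<otimes>\<^bsub>pres_group S R\<^esub> x = x"
    if "x \<in> carrier (pres_group S R)" for x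
    using that by (clarsimp simp: carrier_pres_group mult_pres_group one_pres_group)
      (simp add: geq_class_eq_iff geq.glunit)
  show "\<exists>y\<in>carrier (pres_group S R). y \<otimes>\<^bsub>pres_group S R\<^esub> x = \<one>\<^bsub>pres_group S R\<^esub>"
    if x: "x \<in> carrier (pres_group S R)" for x
  proof -
    obtain s where s: "ggens s \<subseteq> S" "x = geq_class R s"
      using x by (auto simp: carrier_pres_group)
    then have "geq_class R (GInv s) \<in> carrier (pres_group S R)"
      by (simp add: geq_class_in_carrier)
    moreover have "geq_class R (GInv s) \<otimes>\<^bsub>pres_group S R\<^esub> x = \<one>\<^bsub>pres_group S R\<^esub>"
      using s by (simp add: mult_pres_group one_pres_group geq_class_eq_iff geq.glinv)
    ultimately show ?thesis by blast
  qed
qed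

lemma inv_pres_group:
  "ggens s \<subseteq> S \<Longrightarrow> inv\<^bsub>pres_group S R\<^esub> (geq_class R s) = geq_class R (GInv s)"
  by (rule group.inv_equality[OF group_pres_group])
    (simp_all add: geq_class_in_carrier mult_pres_group one_pres_group geq_class_eq_iff geq.glinv)

fun exp_sum :: "gterm \<Rightarrow> int" where
  "exp_sum (GGen i) = 1"
| "exp_sum GOne = 0"
| "exp_sum (GMul a b) = exp_sum a + exp_sum b"
| "exp_sum (GInv a) = - exp_sum a"

lemma exp_sum_geq:
  assumes "geq R a b" and "\<And>a b. (a, b) \<in> R \<Longrightarrow> exp_sum a = exp_sum b"
  shows "exp_sum a = exp_sum b"
  using assms by (induction rule: geq.induct) auto

lemma pres_group_eq_int_pow:
  assumes gens: "\<And>i. i \<in> S \<Longrightarrow> geq R (GGen i) (GGen g)" and "g \<in> S" and "ggens s \<subseteq> S"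
  shows "geq_class R s = geq_class R (GGen g) [^]\<^bsub>pres_group S R\<^esub> exp_sum s"
proof -
  interpret group "pres_group S R"
    by (rule group_pres_group)
  have g: "geq_class R (GGen g) \<in> carrier (pres_group S R)"
    using \<open>g \<in> S\<close> by (simp add: geq_class_in_carrier)
  from \<open>ggens s \<subseteq> S\<close> show ?thesis
  proof (induction s)
    case (GGen i)
    then show ?case
      using gens g by (simp add: geq_class_eq_iff)
  next
    case GOne
    then show ?case
      by (simp add: one_pres_group)
  next
    case (GMul a b)
    then show ?case
      using g by (simp add: mult_pres_group[where S = S, symmetric] int_pow_mult)
  next
    case (GInv a)
    then show ?case
      using g by (simp add: inv_pres_group[where S = S, symmetric] int_pow_neg)
  qed
qed

lemma pres_group_iso_integer_group:
  assumes rels: "\<And>a b. (a, b) \<in> R \<Longrightarrow> exp_sum a = exp_sum b"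
    and gens: "\<And>i. i \<in> S \<Longrightarrow> geq R (GGen i) (GGen g)" and "g \<in> S"
  shows "pres_group S R \<cong> integer_group"
proof -
  let ?G = "pres_group S R" and ?g = "geq_class R (GGen g)"
  interpret group ?G by (rule group_pres_group)
  have g: "?g \<in> carrier ?G"
    using \<open>g \<in> S\<close> by (simp add: geq_class_in_carrier)
  define deg where "deg X = exp_sum (SOME t. t \<in> X)" for X
  have deg: "deg (geq_class R s) = exp_sum s" for s
  proof -
    have "(SOME t. t \<in> geq_class R s) \<in> geq_class R s"
      by (rule someI[of _ s]) (simp add: geq_class_def geq.grefl)
    then show ?thesis
      unfolding deg_def geq_class_def using exp_sum_geq rels by (metis mem_Collect_eq)
  qed
  have hom: "deg \<in> hom ?G integer_group"
    by (rule homI) (auto simp: carrier_pres_group mult_pres_group deg)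
  have "deg (?g [^]\<^bsub>?G\<^esub> k) = k" for k
    using hom_int_pow[OF hom g group_pres_group group_integer_group] by (simp add: deg)
  moreover have "?g [^]\<^bsub>?G\<^esub> deg X = X" if "X \<in> carrier ?G" for X
    using that by (clarsimp simp: carrier_pres_group deg)
      (rule pres_group_eq_int_pow[OF gens \<open>g \<in> S\<close>, symmetric])
  ultimately have "bij_betw deg (carrier ?G) (carrier integer_group)"
    using g by (intro bij_betw_byWitness[where f' = "\<lambda>k. ?g [^]\<^bsub>?G\<^esub> k"]) auto
  then show ?thesis
    using hom by (auto simp: is_iso_def iso_def)
qed

section \<open>Bridge arcs and crossings\<close>

lemma cdist_less: "q < p \<Longrightarrow> p < N \<Longrightarrow> cdist N q p = p - q"
proof -
  assume "q < p" "p < N"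
  then have "p + N - q - 1 = (p - q - 1) + N"
    by simp
  then have "(p + N - q - 1) mod N = (p - q - 1) mod N"
    by (metis mod_add_self2)
  also have "\<dots> = p - q - 1"
    using \<open>p < N\<close> by simp
  finally show ?thesis
    unfolding cdist_def using \<open>q < p\<close> by linarith
qed

lemma cdist_ge: "p \<le> q \<Longrightarrow> q < N \<Longrightarrow> cdist N q p = p + N - q"
  by (simp add: cdist_def)

lemma arc_before_eqI:
  assumes "h \<in> heads A" and less: "\<And>x. x \<in> heads A \<Longrightarrow> x \<noteq> h \<Longrightarrow> cdist N h p < cdist N x p"
  shows "arc_before N A p = h"
proof -
  let ?a = "arc_before N A p"
  have "?a \<in> heads A \<and> (\<forall>y. y \<in> heads A \<longrightarrow> cdist N ?a p \<le> cdist N y p)"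
    unfolding arc_before_def by (rule arg_min_nat_lemma[where k = h]) (rule assms(1))
  then show ?thesis
    using less[of ?a] assms(1) by force
qed

lemma arc_before_last_head_below:
  assumes "h \<in> heads A" "\<forall>x\<in>heads A. x < N" "h < p" "p < N"
    and "\<forall>x\<in>heads A. x < p \<longrightarrow> x \<le> h"
  shows "arc_before N A p = h"
proof (rule arc_before_eqI[OF assms(1)])
  fix x assume x: "x \<in> heads A" "x \<noteq> h"
  show "cdist N h p < cdist N x p"
  proof (cases "x < p")
    case True
    then have "x < h"
      using assms(5) x by force
    then show ?thesis
      using True assms(3,4) by (simp add: cdist_less)
  next
    case False
    moreover have "x < N"
      using assms(2) x by blast
    ultimately show ?thesis
      using assms(3,4) by (simp add: cdist_less cdist_ge)
  qed
qed

lemma arc_before_wrap: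
  assumes "h \<in> heads A" "\<forall>x\<in>heads A. x < N" and "\<forall>x\<in>heads A. p \<le> x \<and> x \<le> h"
  shows "arc_before N A p = h"
proof (rule arc_before_eqI[OF assms(1)])
  fix x assume "x \<in> heads A" "x \<noteq> h"
  then have "p \<le> x" "x < h" "h < N"
    using assms by force+
  then show "cdist N h p < cdist N x p"
    by (simp add: cdist_ge)
qed

text \<open>At a crossing, \<open>u\<close> is the outgoing under-arc (arcs are named by the head they start at),
  \<open>v\<close> the incoming under-arc and \<open>w\<close> the over-arc.\<close>
definition crossing :: "nat \<Rightarrow> arrow list \<Rightarrow> nat \<Rightarrow> nat \<Rightarrow> nat \<Rightarrow> bool" where
  "crossing N A u v w \<longleftrightarrow>
     (\<exists>t s. (t, u, s) \<in> set A \<and> v = arc_before N A u \<and> w = arc_before N A t)"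

lemma equivp_cong_left: "equivp R \<Longrightarrow> R a b \<Longrightarrow> R a c \<longleftrightarrow> R b c"
  by (metis equivp_def)

lemma equivp_qeq: "equivp (qeq R)"
  by (intro equivpI reflpI sympI transpI) (auto intro: qeq.qrefl qeq.qsym qeq.qtrans)

declare qeq.qtrans [trans]

lemma qeq_QRt_self_iff: "qeq R (QRt a b) b \<longleftrightarrow> qeq R a b"
proof
  assume "qeq R (QRt a b) b"
  have "qeq R a (QLt (QRt a b) b)"
    by (rule qeq.qsym, rule qeq.qcancel2)
  also have "qeq R (QLt (QRt a b) b) (QLt b b)"
    using \<open>qeq R (QRt a b) b\<close> by (intro qeq.qcongLt qeq.qrefl)
  also have "qeq R (QLt b b) b"
    by (rule qeq.qidemLt)
  finally show "qeq R a b" .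
next
  assume "qeq R a b"
  then have "qeq R (QRt a b) (QRt b b)"
    by (intro qeq.qcongRt qeq.qrefl)
  also have "qeq R (QRt b b) b"
    by (rule qeq.qidemRt)
  finally show "qeq R (QRt a b) b" .
qed

lemma qeq_QLt_self_iff: "qeq R (QLt a b) b \<longleftrightarrow> qeq R a b"
proof
  assume "qeq R (QLt a b) b"
  have "qeq R a (QRt (QLt a b) b)"
    by (rule qeq.qsym, rule qeq.qcancel1)
  also have "qeq R (QRt (QLt a b) b) (QRt b b)"
    using \<open>qeq R (QLt a b) b\<close> by (intro qeq.qcongRt qeq.qrefl)
  also have "qeq R (QRt b b) b"
    by (rule qeq.qidemRt)
  finally show "qeq R a b" .
next
  assume "qeq R a b"
  then have "qeq R (QLt a b) (QLt b b)"
    by (intro qeq.qcongLt qeq.qrefl)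
  also have "qeq R (QLt b b) b"
    by (rule qeq.qidemLt)
  finally show "qeq R (QLt a b) b" .
qed

lemma crossing_qeq_iff:
  assumes "crossing N A u v w"
  shows "qeq (quandle_rels N A) (QGen u) (QGen w) \<longleftrightarrow> qeq (quandle_rels N A) (QGen v) (QGen w)"
proof -
  let ?R = "quandle_rels N A"
  obtain t s where "(t, u, s) \<in> set A" "v = arc_before N A u" "w = arc_before N A t"
    using assms unfolding crossing_def by blast
  then have "(QGen u, (if s then QRt else QLt) (QGen v) (QGen w)) \<in> ?R"
    unfolding quandle_rels_def by (intro image_eqI[where x = "(t, u, s)"]) simp_all
  then have "qeq ?R (QGen u) (QGen w) \<longleftrightarrow> qeq ?R ((if s then QRt else QLt) (QGen v) (QGen w)) (QGen w)"
    by (intro equivp_cong_left equivp_qeq qeq.qrel)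
  then show ?thesis
    by (cases s) (simp_all add: qeq_QRt_self_iff qeq_QLt_self_iff)
qed

lemma (in group) conj_eq_self_iff:
  "w \<in> carrier G \<Longrightarrow> v \<in> carrier G \<Longrightarrow> w \<otimes> v \<otimes> inv w = w \<longleftrightarrow> v = w"
proof -
  assume "w \<in> carrier G" "v \<in> carrier G"
  then have "w \<otimes> v \<otimes> inv w = w \<longleftrightarrow> w \<otimes> v = w \<otimes> w"
    by (intro inv_solve_right') auto
  also have "\<dots> \<longleftrightarrow> v = w"
    using \<open>w \<in> carrier G\<close> \<open>v \<in> carrier G\<close> by (intro Units_l_cancel) (auto simp: Units_eq)
  finally show ?thesis .
qed

lemma (in group) inv_conj_eq_self_iff:
  "w \<in> carrier G \<Longrightarrow> v \<in> carrier G \<Longrightarrow> inv w \<otimes> v \<otimes> w = w \<longleftrightarrow> v = w"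
  by (simp add: inv_solve_left' m_closed)

lemma crossing_geq_iff:
  assumes "crossing N A u v w"
  shows "geq (group_rels N A) (GGen u) (GGen w) \<longleftrightarrow> geq (group_rels N A) (GGen v) (GGen w)"
proof -
  let ?R = "group_rels N A"
  let ?G = "pres_group UNIV ?R" and ?c = "\<lambda>i. geq_class ?R (GGen i)"
  interpret group ?G by (rule group_pres_group)
  have c: "?c i \<in> carrier ?G" for i
    by (simp add: geq_class_in_carrier)
  obtain t s where "(t, u, s) \<in> set A" "v = arc_before N A u" "w = arc_before N A t"
    using assms unfolding crossing_def by blast
  then have rel: "(GGen u, if s then GMul (GMul (GGen w) (GGen v)) (GInv (GGen w))
                          else GMul (GMul (GInv (GGen w)) (GGen v)) (GGen w)) \<in> ?R"
    unfolding group_rels_def by (intro image_eqI[where x = "(t, u, s)"]) (simp_all add: Let_def)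
  show ?thesis
  proof (cases s)
    case True
    then have "?c u = ?c w \<otimes>\<^bsub>?G\<^esub> ?c v \<otimes>\<^bsub>?G\<^esub> inv\<^bsub>?G\<^esub> ?c w"
      using rel by (simp add: geq_class_eq_iff geq.grel mult_pres_group inv_pres_group)
    then show ?thesis
      using c by (simp flip: geq_class_eq_iff add: conj_eq_self_iff)
  next
    case False
    then have "?c u = inv\<^bsub>?G\<^esub> ?c w \<otimes>\<^bsub>?G\<^esub> ?c v \<otimes>\<^bsub>?G\<^esub> ?c w"
      using rel by (simp add: geq_class_eq_iff geq.grel mult_pres_group inv_pres_group)
    then show ?thesis
      using inv_conj_eq_self_iff[OF c c] by (simp flip: geq_class_eq_iff)
  qed
qed

lemma exp_sum_group_rels: "(a, b) \<in> group_rels N A \<Longrightarrow> exp_sum a = exp_sum b"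
  unfolding group_rels_def by (auto simp: Let_def)

section \<open>The arrow diagrams \<open>\<A>\<^sub>n\<close>\<close>

lemma equivp_zigzag:
  assumes "equivp E"
    and turn: "\<And>k. k < m \<Longrightarrow> E (z k) (z (Suc k)) \<longleftrightarrow> E (z (Suc (Suc k))) (z (Suc k))"
    and "E (z m) (z (Suc m))" and "k \<le> Suc m"
  shows "E (z k) (z (Suc m))"
proof -
  have adjacent: "E (z k) (z (Suc k))" if "k \<le> m" for k
    using that
  proof (induction k rule: inc_induct)
    case base
    show ?case by (rule assms(3))
  next
    case (step k)
    then show ?case
      using turn equivp_symp[OF assms(1)] by blast
  qed
  from \<open>k \<le> Suc m\<close> show ?thesis
  proof (induction k rule: inc_induct)
    case base
    show ?case by (rule equivp_reflp[OF assms(1)])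
  next
    case (step k)
    then have "E (z k) (z (Suc k))"
      using adjacent by simp
    then show ?case
      using step equivp_transp[OF assms(1)] by blast
  qed
qed

lemma heads_A_arrows:
  "heads (A_arrows n) =
     {h. 1 \<le> h \<and> h \<le> n \<and> even (n - h)} \<union> {h. n < h \<and> h \<le> 2 * n + 1 \<and> odd (h - n)}"
    (is "_ = ?H")
proof -
  let ?head = "\<lambda>j. if even (n - j) then j else 2 * n + 2 - j"
  have "(\<lambda>(t, h, s). h) \<circ> (\<lambda>j. if even (n - j) then (2 * n + 2 - j, j, False)
                                else (j, 2 * n + 2 - j, True)) = ?head"
    by auto
  then have "heads (A_arrows n) = insert (n + 1) (?head ` {1..<n + 1})"
    unfolding heads_def A_arrows_def by (simp only: list.set set_map set_upt image_insert image_comp) simp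
  also have "\<dots> = ?H"
  proof (intro equalityI subsetI)
    fix h assume "h \<in> insert (n + 1) (?head ` {1..<n + 1})"
    then show "h \<in> ?H"
      by auto
  next
    fix h assume h: "h \<in> ?H"
    let ?j = "if h \<le> n then h else 2 * n + 2 - h"
    have "h = n + 1 \<or> ?j \<in> {1..<n + 1} \<and> h = ?head ?j"
      using h by auto
    then show "h \<in> insert (n + 1) (?head ` {1..<n + 1})"
      by blast
  qed
  finally show ?thesis .
qed

definition last_head :: "nat \<Rightarrow> nat" where
  "last_head n = (if even n then 2 * n + 1 else 2 * n)"

definition zigzag_arc :: "nat \<Rightarrow> nat \<Rightarrow> nat" where
  "zigzag_arc n k = (if k < n then if even k then n - k else n + k else last_head n)"

lemma last_head_in_heads: "last_head n \<in> heads (A_arrows n)"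
  by (simp add: heads_A_arrows last_head_def odd_pos)

lemma heads_A_arrows_less: "\<forall>x\<in>heads (A_arrows n). x < A_N n"
  by (auto simp: heads_A_arrows A_N_def)

lemma heads_A_arrows_subset_zigzag: "heads (A_arrows n) \<subseteq> zigzag_arc n ` {..n}"
proof
  fix h assume "h \<in> heads (A_arrows n)"
  then have h: "(1 \<le> h \<and> h \<le> n \<and> even (n - h)) \<or> (n < h \<and> h \<le> 2 * n + 1 \<and> odd (h - n))"
    by (simp add: heads_A_arrows)
  show "h \<in> zigzag_arc n ` {..n}"
  proof (rule image_eqI)
    show "h = zigzag_arc n (if h \<le> n then n - h else min (h - n) n)"
      using h unfolding zigzag_arc_def last_head_def by auto presburger+
  qed simp
qed

lemma y_arrow_in_A_arrows:
  "k < n \<Longrightarrow>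
     (if even k then (n + 2 + k, n - k, False) else (n - k, n + 2 + k, True)) \<in> set (A_arrows n)"
  unfolding A_arrows_def by (auto intro!: image_eqI[where x = "n - k"] dest: odd_pos)

lemma arc_before_A_arrows_upper:
  assumes "k < n"
  shows "arc_before (A_N n) (A_arrows n) (n + 2 + k) = n + 1 + 2 * (k div 2)"
proof (rule arc_before_last_head_below[OF _ heads_A_arrows_less])
  show "n + 1 + 2 * (k div 2) \<in> heads (A_arrows n)"
    using assms by (simp add: heads_A_arrows)
  show "n + 1 + 2 * (k div 2) < n + 2 + k" "n + 2 + k < A_N n"
    using assms by (simp_all add: A_N_def)
  show "\<forall>x\<in>heads (A_arrows n). x < n + 2 + k \<longrightarrow> x \<le> n + 1 + 2 * (k div 2)"
    by (auto simp: heads_A_arrows; presburger)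
qed

lemma arc_before_A_arrows_lower:
  assumes "k < n"
  shows "arc_before (A_N n) (A_arrows n) (n - k) = zigzag_arc n (2 * (k div 2) + 2)"
proof (cases "2 * (k div 2) + 2 < n")
  case True
  have "arc_before (A_N n) (A_arrows n) (n - k) = n - (2 * (k div 2) + 2)"
  proof (rule arc_before_last_head_below[OF _ heads_A_arrows_less])
    show "n - (2 * (k div 2) + 2) \<in> heads (A_arrows n)"
      using True by (simp add: heads_A_arrows)
    show "n - (2 * (k div 2) + 2) < n - k" "n - k < A_N n"
      using True assms by (simp_all add: A_N_def)
    show "\<forall>x\<in>heads (A_arrows n). x < n - k \<longrightarrow> x \<le> n - (2 * (k div 2) + 2)"
      using True by (auto simp: heads_A_arrows; presburger)
  qed
  then show ?thesis
    using True by (simp add: zigzag_arc_def)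
next
  case False
  have "arc_before (A_N n) (A_arrows n) (n - k) = last_head n"
    using last_head_in_heads heads_A_arrows_less
  proof (rule arc_before_wrap)
    show "\<forall>x\<in>heads (A_arrows n). n - k \<le> x \<and> x \<le> last_head n"
      using False by (auto simp: heads_A_arrows last_head_def; presburger)
  qed
  then show ?thesis
    using False by (simp add: zigzag_arc_def)
qed

lemma zigzag_arc_odd: "odd k \<Longrightarrow> k \<le> Suc n \<Longrightarrow> zigzag_arc n k = n + k"
  by (auto simp: zigzag_arc_def last_head_def; presburger)

lemma crossing_A_arrows_zigzag:
  assumes "k < n"
  shows "if even k
    then crossing (A_N n) (A_arrows n)
      (zigzag_arc n k) (zigzag_arc n (Suc (Suc k))) (zigzag_arc n (Suc k))
    else crossing (A_N n) (A_arrows n)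
      (zigzag_arc n (Suc (Suc k))) (zigzag_arc n k) (zigzag_arc n (Suc k))"
proof (cases "even k")
  case True
  then have "2 * (k div 2) = k"
    by simp
  then have "arc_before (A_N n) (A_arrows n) (n - k) = zigzag_arc n (Suc (Suc k))"
    "arc_before (A_N n) (A_arrows n) (n + 2 + k) = zigzag_arc n (Suc k)"
    using True assms arc_before_A_arrows_lower[OF assms] arc_before_A_arrows_upper[OF assms]
    by (simp_all add: zigzag_arc_odd)
  moreover have "zigzag_arc n k = n - k"
    using True assms by (simp add: zigzag_arc_def)
  ultimately show ?thesis
    using True y_arrow_in_A_arrows[OF assms] by (force simp: crossing_def)
next
  case False
  then have "2 * (k div 2) = k - 1"
    by presburger
  then have "zigzag_arc n (Suc (Suc k)) = n + 2 + k"
    "arc_before (A_N n) (A_arrows n) (n + 2 + k) = zigzag_arc n k"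
    "arc_before (A_N n) (A_arrows n) (n - k) = zigzag_arc n (Suc k)"
    using False assms arc_before_A_arrows_lower[OF assms] arc_before_A_arrows_upper[OF assms]
    by (simp_all add: zigzag_arc_odd)
  then show ?thesis
    using False y_arrow_in_A_arrows[OF assms] by (force simp: crossing_def)
qed

lemma heads_A_arrows_related:
  assumes "equivp E"
    and crossing_iff: "\<And>u v w. crossing (A_N n) (A_arrows n) u v w \<Longrightarrow> E u w \<longleftrightarrow> E v w"
    and "h \<in> heads (A_arrows n)"
  shows "E h (last_head n)"
proof -
  obtain k where "k \<le> n" "h = zigzag_arc n k"
    using heads_A_arrows_subset_zigzag assms(3) by blast
  moreover have "E (zigzag_arc n k) (zigzag_arc n (Suc n))" if "k \<le> n" for k
  proof (rule equivp_zigzag[OF assms(1)])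
    show "E (zigzag_arc n k) (zigzag_arc n (Suc k)) \<longleftrightarrow>
        E (zigzag_arc n (Suc (Suc k))) (zigzag_arc n (Suc k))" if "k < n" for k
      using crossing_A_arrows_zigzag[OF that] crossing_iff by (cases "even k") auto
    show "E (zigzag_arc n n) (zigzag_arc n (Suc n))"
      using equivp_reflp[OF assms(1)] by (simp add: zigzag_arc_def)
  qed (use that in simp)
  ultimately show ?thesis
    by (simp add: zigzag_arc_def)
qed

theorem theorem10:
  fixes n :: nat
  shows "(\<forall>i\<in>heads (A_arrows n). \<forall>j\<in>heads (A_arrows n).
            qeq (quandle_rels (A_N n) (A_arrows n)) (QGen i) (QGen j))
         \<and> fund_group (A_N n) (A_arrows n) \<cong> integer_group"
proof
  let ?N = "A_N n" and ?A = "A_arrows n"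
  have "qeq (quandle_rels ?N ?A) (QGen h) (QGen (last_head n))" if "h \<in> heads ?A" for h
    using equivp_vimage2p[OF equivp_qeq, where f = QGen] crossing_qeq_iff that
    unfolding vimage2p_def by (rule heads_A_arrows_related)
  then show "\<forall>i\<in>heads ?A. \<forall>j\<in>heads ?A. qeq (quandle_rels ?N ?A) (QGen i) (QGen j)"
    by (meson qeq.qsym qeq.qtrans)
  have "geq (group_rels ?N ?A) (GGen h) (GGen (last_head n))" if "h \<in> heads ?A" for h
    using equivp_vimage2p[OF equivp_geq, where f = GGen] crossing_geq_iff that
    unfolding vimage2p_def by (rule heads_A_arrows_related)
  then show "fund_group ?N ?A \<cong> integer_group"
    unfolding fund_group_def
    by (intro pres_group_iso_integer_group[OF exp_sum_group_rels _ last_head_in_heads])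
qed

end
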